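(* With $\Delta$ and $\mathcal{T}$ as in the context, for every $\sigma\in\mathcal{T}$ one has the co-associativity identity $$(\Delta\otimes\mathrm{Id})\Delta\sigma=(\mathrm{Id}\otimes\Delta)\Delta\sigma,$$ both sides being regarded as elements of $\mathrm{Vec}(\mathcal{T})\otimes\mathrm{Alg}(\mathcal{T}^{\mathrm{cen}})\otimes\mathrm{Alg}(\mathcal{T}^{\mathrm{cen}})$.
   Context: Fix $d\ge1$, $\delta>0$. Trees: $\widehat{\mathcal{T}}_r$ is the smallest set containing the generators $\mathbf{1},\mathbf{X}_1,\dots,\mathbf{X}_d,\Xi$ and closed under $(\tau_1,\tau_2,\tau_3)\mapsto\mathcal{I}(\tau_1)\mathcal{I}(\tau_2)\mathcal{I}(\tau_3)$, a formal non-commutative "tree product" of three "planted trees" $\mathcal{I}(\tau_k)$. Orders: $|\mathbf{1}|=-2$, $|\mathbf{X}_i|=-1$, $|\Xi|=-3+\delta$, $|\mathcal{I}(\tau_1)\mathcal{I}(\tau_2)\mathcal{I}(\tau_3)|=6+\sum_k|\tau_k|$, $|\mathcal{I}(\tau)|=|\tau|+2$. Let $\mathrm{Poly}=\{\mathbf{1},\mathbf{X}_1,\dots,\mathbf{X}_d\}$, $\mathcal{W}=\{\tau:|\tau|<-2\}$, $\mathcal{N}=\{\tau:-2\le|\tau|\le0\}$, $\mathring{\mathcal{N}}=\mathcal{N}\setminus\mathrm{Poly}$, $\widetilde{\mathcal{N}}=\{\tau\in\mathring{\mathcal{N}}:-1<|\tau|<0\}$. Standing assumption: $\delta$ is such that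 no tree in $\mathcal{W}\cup\mathring{\mathcal{N}}$ has integer order. Further symbols $\mathcal{I}^+_i(\tau)$, $1\le i\le d$, $\tau\in\widetilde{\mathcal{N}}\cup\{\mathbf{X}_i\}$ (planted trees of order $|\tau|+1$), with conventions $\mathcal{I}^+_i(\mathbf{X}_j)=0$ for $j\ne i$ and $\mathcal{I}^+_i(\tau)=0$ for $\tau\in\mathring{\mathcal{N}}\setminus\widetilde{\mathcal{N}}$. Set $\mathcal{T}_r=\mathcal{W}\cup\mathring{\mathcal{N}}$, $\mathcal{T}_l=\{\mathcal{I}(\tau):\tau\in\mathcal{T}_r\cup\mathrm{Poly}\}$, $\mathcal{T}=\mathcal{T}_r\cup\mathcal{T}_l$, $\mathcal{T}^{\mathrm{cen}}=\{\mathcal{I}(\tau):\tau\in\mathcal{N}\}\cup\{\mathcal{I}^+_i(\tau):1\le i\le d,\ \tau\in\widetilde{\mathcal{N}}\cup\{\mathbf{X}_i\}\}$, $\mathcal{T}_+=\mathcal{T}\cup\mathcal{T}^{\mathrm{cen}}$. Truncation convention: if $|\sigma_1|+|\sigma_2|+|\sigma_3|>0$ for planted trees $\sigma_k$ then the tree product $\sigma_1\sigma_2\sigma_3$ is $0$; tree products, $\mathcal{I}$, $\mathcal{I}^+_i$ extend (multi)linearly. $\mathrm{Vec}(S)$ is the real vector space with basis $S$; $\mathrm{Alg}(S)$ is the free unital non-commutative real algebra generated by a set $S$ of planted trees (product $\cdot$, the "forest product"; unit $1$, the empty forest). The coproduct $\Delta:\mathcal{T}_+\to\mathrm{Vec}(\mathcal{T}_+)\otimes\mathrm{Alg}(\mathcal{T}^{\mathrm{cen}})$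 is defined recursively by: $\Delta\mathcal{I}(\mathbf{1})=\mathcal{I}(\mathbf{1})\otimes\mathcal{I}(\mathbf{1})$; $\Delta\mathcal{I}(\mathbf{X}_i)=\mathcal{I}(\mathbf{1})\otimes\mathcal{I}(\mathbf{X}_i)+\mathcal{I}(\mathbf{X}_i)\otimes\mathcal{I}^+_i(\mathbf{X}_i)$; $\Delta\mathcal{I}^+_i(\mathbf{X}_i)=\mathcal{I}^+_i(\mathbf{X}_i)\otimes\mathcal{I}^+_i(\mathbf{X}_i)$; $\Delta w=w\otimes1$, $\Delta\mathcal{I}(w)=\mathcal{I}(w)\otimes1$ for $w\in\mathcal{W}$; for $\tau\in\mathring{\mathcal{N}}$: $\Delta\mathcal{I}(\tau)=\mathcal{I}(\mathbf{1})\otimes\mathcal{I}(\tau)+\sum_{i=1}^d\mathcal{I}(\mathbf{X}_i)\otimes\mathcal{I}^+_i(\tau)+(\mathcal{I}\otimes\mathrm{Id})\Delta\tau$; for $\tau\in\widetilde{\mathcal{N}}$: $\Delta\mathcal{I}^+_i(\tau)=\mathcal{I}^+_i(\mathbf{X}_i)\otimes\mathcal{I}^+_i(\tau)+(\mathcal{I}^+_i\otimes\mathrm{Id})\Delta\tau$; for $\mathcal{I}(\tau_1)\mathcal{I}(\tau_2)\mathcal{I}(\tau_3)\in\mathring{\mathcal{N}}$: $\Delta(\mathcal{I}(\tau_1)\mathcal{I}(\tau_2)\mathcal{I}(\tau_3))=\Delta\mathcal{I}(\tau_1)\Delta\mathcal{I}(\tau_2)\Delta\mathcal{I}(\tau_3)$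 with $\prod_k(\sigma_k\otimes a_k):=\sigma_1\sigma_2\sigma_3\otimes a_1\cdot a_2\cdot a_3$ extended linearly. $\Delta$ is extended linearly, and to forests multiplicatively: $\Delta1=1\otimes1$ and $\Delta(\sigma_1\cdots\sigma_n)=(\Delta\sigma_1)\cdots(\Delta\sigma_n)$ with componentwise forest product; thus $\Delta$ acts on $\mathrm{Alg}(\mathcal{T}^{\mathrm{cen}})$. *)

theory Defs
  imports Complex_Main
begin

text \<open>Trees of the regularity structure: One = the polynomial 1, X i = X_i,
  Xi = the noise, Prod a b c = the tree product I(a) I(b) I(c).\<close>
datatype tr = One | X nat | Xi | Prod tr tr tr

text \<open>Planted trees: PI t = I(t), PIp i t = I^+_i(t).\<close>
datatype pl = PI tr | PIp nat tr

text \<open>Basis of Vec(T_+): a tree or a planted tree.\<close>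
datatype el = ETr tr | EPl pl

text \<open>Well-formed trees (elements of the hatted T_r): indices of X between 1 and d.\<close>
fun wf :: "nat \<Rightarrow> tr \<Rightarrow> bool" where
  "wf d One = True"
| "wf d (X i) = (1 \<le> i \<and> i \<le> d)"
| "wf d Xi = True"
| "wf d (Prod a b c) = (wf d a \<and> wf d b \<and> wf d c)"

fun ord :: "real \<Rightarrow> tr \<Rightarrow> real" where
  "ord \<delta> One = -2"
| "ord \<delta> (X i) = -1"
| "ord \<delta> Xi = -3 + \<delta>"
| "ord \<delta> (Prod a b c) = 6 + ord \<delta> a + ord \<delta> b + ord \<delta> c"

definition isPoly :: "nat \<Rightarrow> tr \<Rightarrow> bool" where
  "isPoly d t \<longleftrightarrow> t = One \<or> (\<exists>i. 1 \<le> i \<and> i \<le> d \<and> t = X i)"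

definition inW :: "real \<Rightarrow> tr \<Rightarrow> bool" where
  "inW \<delta> t \<longleftrightarrow> ord \<delta> t < -2"

definition inN :: "real \<Rightarrow> tr \<Rightarrow> bool" where
  "inN \<delta> t \<longleftrightarrow> -2 \<le> ord \<delta> t \<and> ord \<delta> t \<le> 0"

definition inNo :: "real \<Rightarrow> nat \<Rightarrow> tr \<Rightarrow> bool" where
  "inNo \<delta> d t \<longleftrightarrow> inN \<delta> t \<and> \<not> isPoly d t"

definition inNt :: "real \<Rightarrow> nat \<Rightarrow> tr \<Rightarrow> bool" where
  "inNt \<delta> d t \<longleftrightarrow> inNo \<delta> d t \<and> -1 < ord \<delta> t \<and> ord \<delta> t < 0"

text \<open>I^+_i(t) is a nonzero basis element only for t in N-tilde or t = X_i;
  otherwise it is 0 (convention).\<close>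
definition Ipnz :: "real \<Rightarrow> nat \<Rightarrow> nat \<Rightarrow> tr \<Rightarrow> bool" where
  "Ipnz \<delta> d i t \<longleftrightarrow> t = X i \<or> inNt \<delta> d t"

text \<open>The set T = T_r \<union> T_l (as elements of el).\<close>
definition inT :: "real \<Rightarrow> nat \<Rightarrow> el \<Rightarrow> bool" where
  "inT \<delta> d s \<longleftrightarrow>
     (\<exists>t. s = ETr t \<and> wf d t \<and> (inW \<delta> t \<or> inNo \<delta> d t)) \<or>
     (\<exists>t. s = EPl (PI t) \<and> wf d t \<and> (inW \<delta> t \<or> inNo \<delta> d t \<or> isPoly d t))"

text \<open>Elements of free vector spaces are represented by finite lists of
  (coefficient, basis element) pairs; two such lists represent the same vector
  iff they have the same coefficient function.\<close>
definition vec :: "(real \<times> 'b) list \<Rightarrow> 'b \<Rightarrow> real" where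
  "vec L b = sum_list (map fst (filter (\<lambda>x. snd x = b) L))"

text \<open>Tree product of three planted trees I(s1) I(s2) I(s3), with truncation
  (zero if the sum of their orders is > 0), extended multilinearly, tensored with
  forest products on the right.\<close>
definition tprod :: "real \<Rightarrow> (real \<times> tr \<times> pl list) list \<Rightarrow> (real \<times> tr \<times> pl list) list
    \<Rightarrow> (real \<times> tr \<times> pl list) list \<Rightarrow> (real \<times> tr \<times> pl list) list" where
  "tprod \<delta> A B C =
     [(c1 * c2 * c3, Prod s1 s2 s3, w1 @ w2 @ w3).
        (c1, s1, w1) \<leftarrow> A, (c2, s2, w2) \<leftarrow> B, (c3, s3, w3) \<leftarrow> C,
        \<not> ((ord \<delta> s1 + 2) + (ord \<delta> s2 + 2) + (ord \<delta> s3 + 2) > 0)]"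

text \<open>Delta I(t), given D = Delta t; an entry (c, s, w) stands for c I(s) \<otimes> w.\<close>
definition dI_of :: "real \<Rightarrow> nat \<Rightarrow> tr \<Rightarrow> (real \<times> tr \<times> pl list) list
    \<Rightarrow> (real \<times> tr \<times> pl list) list" where
  "dI_of \<delta> d t D =
     (case t of
        One \<Rightarrow> [(1, One, [PI One])]
      | X i \<Rightarrow> [(1, One, [PI (X i)]), (1, X i, [PIp i (X i)])]
      | _ \<Rightarrow> (if inW \<delta> t then [(1, t, [])]
              else [(1, One, [PI t])]
                   @ [(1, X i, [PIp i t]). i \<leftarrow> [1..<d+1], Ipnz \<delta> d i t]
                   @ D))"

text \<open>Delta on trees of T_r; an entry (c, s, w) stands for c s \<otimes> w.\<close>
fun dT :: "real \<Rightarrow> nat \<Rightarrow> tr \<Rightarrow> (real \<times> tr \<times> pl list) list" where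
  "dT \<delta> d (Prod a b c) =
     (if inW \<delta> (Prod a b c) then [(1, Prod a b c, [])]
      else tprod \<delta> (dI_of \<delta> d a (dT \<delta> d a)) (dI_of \<delta> d b (dT \<delta> d b))
                   (dI_of \<delta> d c (dT \<delta> d c)))"
| "dT \<delta> d t = [(1, t, [])]"

definition dI :: "real \<Rightarrow> nat \<Rightarrow> tr \<Rightarrow> (real \<times> tr \<times> pl list) list" where
  "dI \<delta> d t = dI_of \<delta> d t (dT \<delta> d t)"

text \<open>Delta I^+_i(t); entries (c, p, w) stand for c p \<otimes> w with p a planted tree.\<close>
definition dIp :: "real \<Rightarrow> nat \<Rightarrow> nat \<Rightarrow> tr \<Rightarrow> (real \<times> pl \<times> pl list) list" where
  "dIp \<delta> d i t =
     (if t = X i then [(1, PIp i (X i), [PIp i (X i)])]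
      else if inNt \<delta> d t then
        (1, PIp i (X i), [PIp i t]) #
        [(c, PIp i s, w). (c, s, w) \<leftarrow> dT \<delta> d t, Ipnz \<delta> d i s]
      else [])"

definition copP :: "real \<Rightarrow> nat \<Rightarrow> pl \<Rightarrow> (real \<times> pl \<times> pl list) list" where
  "copP \<delta> d p =
     (case p of
        PI t \<Rightarrow> [(c, PI s, w). (c, s, w) \<leftarrow> dI \<delta> d t]
      | PIp i t \<Rightarrow> dIp \<delta> d i t)"

definition cop :: "real \<Rightarrow> nat \<Rightarrow> el \<Rightarrow> (real \<times> el \<times> pl list) list" where
  "cop \<delta> d s =
     (case s of
        ETr t \<Rightarrow> [(c, ETr u, w). (c, u, w) \<leftarrow> dT \<delta> d t]
      | EPl p \<Rightarrow> [(c, EPl q, w). (c, q, w) \<leftarrow> copP \<delta> d p])"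

fun copW :: "real \<Rightarrow> nat \<Rightarrow> pl list \<Rightarrow> (real \<times> pl list \<times> pl list) list" where
  "copW \<delta> d [] = [(1, [], [])]"
| "copW \<delta> d (p # ps) =
     [(c * c', q # l, w @ w'). (c, q, w) \<leftarrow> copP \<delta> d p, (c', l, w') \<leftarrow> copW \<delta> d ps]"

definition lhs :: "real \<Rightarrow> nat \<Rightarrow> el \<Rightarrow> (real \<times> el \<times> pl list \<times> pl list) list" where
  "lhs \<delta> d s = [(c * c', e', w', w). (c, e, w) \<leftarrow> cop \<delta> d s, (c', e', w') \<leftarrow> cop \<delta> d e]"

definition rhs :: "real \<Rightarrow> nat \<Rightarrow> el \<Rightarrow> (real \<times> el \<times> pl list \<times> pl list) list" where
  "rhs \<delta> d s = [(c * c', e, w1, w2). (c, e, w) \<leftarrow> cop \<delta> d s, (c', w1, w2) \<leftarrow> copW \<delta> d w]"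

end

theory Submission imports Defs "HOL-Library.Multiset" begin

(* Both sides are compared as multisets of basis tensors, which determine their coefficient
   functions. Coassociativity on \<Delta>\<tau> and on \<Delta>I(\<tau>) is proved together, by induction on trees \<tau>
   of order at most 0.

   \<Delta> is multiplicative on forests, so (Id \<otimes> \<Delta>) commutes with the tree product. So does
   (\<Delta> \<otimes> Id): the left factors of \<Delta>I(\<tau>) have order at most |\<tau>|, hence a product of such factors
   is never truncated. This settles \<Delta>\<tau> for a tree product \<tau> = I(\<tau>1)I(\<tau>2)I(\<tau>3).

   For \<Delta>I(\<tau>) = I(1) \<otimes> I(\<tau>) + \<Sum>i X_i \<otimes> I+_i(\<tau>) + (I \<otimes> Id)\<Delta>\<tau>, both sides consist of
   I(1) \<otimes> I(1) \<otimes> I(\<tau>), the terms I(1) \<otimes> I(s) \<otimes> w and X_i \<otimes> I+_i(s) \<otimes> w for s \<otimes> w running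
   through the last two summands, and (\<Delta> \<otimes> Id)\<Delta>\<tau> resp. (Id \<otimes> \<Delta>)\<Delta>\<tau>. On the right the
   X_i-terms arise from X_i \<otimes> \<Delta>I+_i(\<tau>) and so need I+_i(\<tau>) \<noteq> 0; that I+_i(s) \<noteq> 0 forces
   I+_i(\<tau>) \<noteq> 0 is where the orders being non-integers is used. *)

lemma sum_mset_sum_mset_image:
  "(\<Sum>y\<in>#(\<Sum>x\<in>#M. f x). g y) = (\<Sum>x\<in>#M. \<Sum>y\<in>#f x. g y)"
  by (induction M) simp_all

lemma sum_mset_sum_mset: "\<Sum>\<^sub># (\<Sum>x\<in>#M. f x) = (\<Sum>x\<in>#M. \<Sum>\<^sub># (f x))"
  by (induction M) simp_all

lemma image_mset_sum_mset:
  "image_mset h (\<Sum>x\<in>#M. f x) = (\<Sum>x\<in>#M. image_mset h (f x))"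
  by (induction M) simp_all

lemma sum_mset_cong:
  "(\<And>x. x \<in># M \<Longrightarrow> f x = g x) \<Longrightarrow> (\<Sum>x\<in>#M. f x) = (\<Sum>x\<in>#M. g x)"
  by (simp cong: image_mset_cong)

lemma sum_mset_if_const:
  "(\<Sum>x\<in>#M. if P then f x else {#}) = (if P then (\<Sum>x\<in>#M. f x) else {#})"
  by (cases P) simp_all

lemma sum_mset_add_mset:
  "(\<Sum>x\<in>#M. add_mset (f x) (g x)) = image_mset f M + (\<Sum>x\<in>#M. g x)"
  by (induction M) (simp_all add: ac_simps)

lemma sum_mset_if_eq:
  "(\<Sum>j\<in>#M. if j = i then {#f j#} else {#}) = replicate_mset (count M i) (f i)"
  by (induction M) auto

lemma sum_mset_swap3:
  "(\<Sum>p\<in>#M. \<Sum>q\<in>#N. \<Sum>r\<in>#K. f p q r) = (\<Sum>r\<in>#K. \<Sum>p\<in>#M. \<Sum>q\<in>#N. f p q r)"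
proof -
  have "(\<Sum>p\<in>#M. \<Sum>q\<in>#N. \<Sum>r\<in>#K. f p q r) = (\<Sum>p\<in>#M. \<Sum>r\<in>#K. \<Sum>q\<in>#N. f p q r)"
    by (rule sum_mset_cong) (rule sum_mset.swap)
  also have "\<dots> = (\<Sum>r\<in>#K. \<Sum>p\<in>#M. \<Sum>q\<in>#N. f p q r)"
    by (rule sum_mset.swap)
  finally show ?thesis .
qed

lemma mset_concat_map [simp]: "mset (concat (map f xs)) = (\<Sum>x\<in>#mset xs. mset (f x))"
  by (induction xs) simp_all

lemma vec_cong_mset:
  assumes "mset L = mset L'"
  shows "vec L = vec L'"
proof
  have "vec M b = (\<Sum>x\<in>#filter_mset (\<lambda>x. snd x = b) (mset M). fst x)"
    for M :: "(real \<times> 'a) list" and b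
    unfolding vec_def by (metis mset_filter mset_map sum_mset_sum_list)
  then show "vec L b = vec L' b" for b
    using assms by simp
qed

lemma ord_gt_minus3: "\<delta> > 0 \<Longrightarrow> -3 < ord \<delta> t"
  by (induction t) auto

lemma ord_factors_lt_ord_Prod:
  assumes "\<delta> > 0"
  shows "ord \<delta> a < ord \<delta> (Prod a b c)" "ord \<delta> b < ord \<delta> (Prod a b c)" "ord \<delta> c < ord \<delta> (Prod a b c)"
  using ord_gt_minus3[OF assms, of a] ord_gt_minus3[OF assms, of b] ord_gt_minus3[OF assms, of c]
  by auto

lemma Ipnz_X_iff: "1 \<le> i \<Longrightarrow> i \<le> d \<Longrightarrow> Ipnz \<delta> d j (X i) \<longleftrightarrow> j = i"
  by (auto simp: Ipnz_def inNt_def inNo_def isPoly_def)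

lemma dI_One: "dI \<delta> d One = [(1, One, [PI One])]"
  by (simp add: dI_def dI_of_def)

lemma dI_X: "dI \<delta> d (X i) = [(1, One, [PI (X i)]), (1, X i, [PIp i (X i)])]"
  by (simp add: dI_def dI_of_def)

lemma dI_inW: "inW \<delta> t \<Longrightarrow> dI \<delta> d t = [(1, t, [])]"
  by (cases t) (simp_all add: dI_def dI_of_def inW_def)

lemma dI_not_inW:
  assumes "t \<noteq> One" "\<And>i. t \<noteq> X i" "\<not> inW \<delta> t"
  shows "dI \<delta> d t =
     [(1, One, [PI t])] @ [(1, X i, [PIp i t]). i \<leftarrow> [1..<d+1], Ipnz \<delta> d i t] @ dT \<delta> d t"
  using assms by (cases t) (auto simp: dI_def dI_of_def)

lemmas dI_simps = dI_One dI_X dI_inW dI_not_inW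

lemma set_tprodD:
  "x \<in> set (tprod \<delta> A B C) \<Longrightarrow> \<exists>c1 s1 w1 c2 s2 w2 c3 s3 w3.
     (c1, s1, w1) \<in> set A \<and> (c2, s2, w2) \<in> set B \<and> (c3, s3, w3) \<in> set C \<and>
     \<not> ((ord \<delta> s1 + 2) + (ord \<delta> s2 + 2) + (ord \<delta> s3 + 2) > 0) \<and>
     x = (c1 * c2 * c3, Prod s1 s2 s3, w1 @ w2 @ w3)"
  unfolding tprod_def by (auto split: if_splits) blast

lemma dT_dI_ord_le:
  "(\<forall>(c, s, w)\<in>set (dT \<delta> d t). ord \<delta> s \<le> ord \<delta> t) \<and>
   (\<forall>(c, s, w)\<in>set (dI \<delta> d t). ord \<delta> s \<le> ord \<delta> t)"
proof (induction t)
  case (Prod a b c)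
  have dT: "\<forall>(c', s, w)\<in>set (dT \<delta> d (Prod a b c)). ord \<delta> s \<le> ord \<delta> (Prod a b c)"
  proof (cases "inW \<delta> (Prod a b c)")
    case False
    then show ?thesis using Prod.IH by (fastforce simp: dI_def dest!: set_tprodD)
  qed simp
  moreover have "\<forall>(c', s, w)\<in>set (dI \<delta> d (Prod a b c)). ord \<delta> s \<le> ord \<delta> (Prod a b c)"
  proof (cases "inW \<delta> (Prod a b c)")
    case False
    then show ?thesis using dT by (auto simp: dI_simps inW_def Ipnz_def inNt_def)
  qed (simp add: dI_simps)
  ultimately show ?case ..
next
  case Xi
  then show ?case by (cases "inW \<delta> Xi") (auto simp: dI_simps inW_def Ipnz_def inNt_def)
qed (auto simp: dI_simps)

lemma dT_shape:
  "(c, s, w) \<in> set (dT \<delta> d t) \<Longrightarrow> s = t \<or> (\<exists>a b c. s = Prod a b c)"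
  by (cases t) (auto split: if_splits dest!: set_tprodD)

lemma dT_dI_inW:
  assumes "\<delta> > 0"
  shows "(\<not> inW \<delta> t \<longrightarrow> (\<forall>(c, s, w)\<in>set (dT \<delta> d t). \<not> inW \<delta> s)) \<and>
    (\<forall>(c, s, w)\<in>set (dI \<delta> d t). inW \<delta> s \<longrightarrow> s = t)"
proof (induction t)
  case (Prod a b c)
  have dT: "\<not> inW \<delta> s" if nW: "\<not> inW \<delta> (Prod a b c)" and x: "(c', s, w) \<in> set (dT \<delta> d (Prod a b c))"
    for c' s w
  proof
    assume W: "inW \<delta> s"
    from nW x obtain c1 s1 w1 c2 s2 w2 c3 s3 w3 where
      "(c1, s1, w1) \<in> set (dI \<delta> d a)" "(c2, s2, w2) \<in> set (dI \<delta> d b)"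
      "(c3, s3, w3) \<in> set (dI \<delta> d c)"
      and s: "s = Prod s1 s2 s3"
      by (auto simp: dI_def dest!: set_tprodD)
    moreover have "inW \<delta> s1" "inW \<delta> s2" "inW \<delta> s3"
      using W ord_factors_lt_ord_Prod[OF assms, where a = s1 and b = s2 and c = s3]
      by (auto simp: s inW_def)
    ultimately have "s = Prod a b c" using Prod.IH by fastforce
    then show False using W nW by simp
  qed
  moreover have "\<forall>(c', s, w)\<in>set (dI \<delta> d (Prod a b c)). inW \<delta> s \<longrightarrow> s = Prod a b c"
  proof (cases "inW \<delta> (Prod a b c)")
    case False
    then show ?thesis using dT by (auto simp: dI_simps inW_def)
  qed (simp add: dI_simps)
  ultimately show ?case by blast
next
  case Xi
  then show ?case by (cases "inW \<delta> Xi") (auto simp: dI_simps inW_def)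
qed (auto simp: dI_simps inW_def)

lemma dT_Prod:
  assumes "\<delta> > 0"
  shows "dT \<delta> d (Prod a b c) = tprod \<delta> (dI \<delta> d a) (dI \<delta> d b) (dI \<delta> d c)"
proof (cases "inW \<delta> (Prod a b c)")
  case True
  have "inW \<delta> a" "inW \<delta> b" "inW \<delta> c"
    using True ord_factors_lt_ord_Prod[OF assms, where a = a and b = b and c = c]
    by (auto simp: inW_def)
  then show ?thesis using True by (simp add: dI_inW tprod_def inW_def)
qed (simp add: dI_def)

lemma mset_copW_append:
  "mset (copW \<delta> d (u @ v)) = (\<Sum>(c, u', u'')\<in>#mset (copW \<delta> d u). \<Sum>(c', v', v'')\<in>#mset (copW \<delta> d v).
      {#(c * c', u' @ v', u'' @ v'')#})"
proof (induction u)
  case Nil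
  show ?case by (simp add: split_beta')
next
  case (Cons p ps)
  show ?case
    by (simp add: Cons split_beta' sum_mset_sum_mset_image sum_mset_sum_mset image_mset_sum_mset
        mult.assoc multiset.map_comp o_def)
qed

lemma mset_copW_single:
  "mset (copW \<delta> d [p]) = image_mset (\<lambda>(c, q, w). (c, [q], w)) (mset (copP \<delta> d p))"
  by (simp add: split_beta')

(* (c, s, w) stands for c s \<otimes> w and (c, s, u, v) for c s \<otimes> u \<otimes> v, with s a tree or, depending
   on context, the planted tree I(s). *)
type_synonym tens2 = "real \<times> tr \<times> pl list"
type_synonym tens3 = "real \<times> tr \<times> pl list \<times> pl list"

definition tprod_mset :: "real \<Rightarrow> tens2 multiset \<Rightarrow> tens2 multiset \<Rightarrow> tens2 multiset \<Rightarrow> tens2 multiset"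
  where
  "tprod_mset \<delta> A B C = (\<Sum>(c1, s1, w1)\<in>#A. \<Sum>(c2, s2, w2)\<in>#B. \<Sum>(c3, s3, w3)\<in>#C.
      if \<not> ((ord \<delta> s1 + 2) + (ord \<delta> s2 + 2) + (ord \<delta> s3 + 2) > 0)
      then {#(c1 * c2 * c3, Prod s1 s2 s3, w1 @ w2 @ w3)#} else {#})"

lemma mset_tprod: "mset (tprod \<delta> A B C) = tprod_mset \<delta> (mset A) (mset B) (mset C)"
  unfolding tprod_def tprod_mset_def
  by (simp add: split_beta' if_distrib[of mset] cong: if_cong)

definition tprod3_term :: "real \<Rightarrow> tens3 \<Rightarrow> tens3 \<Rightarrow> tens3 \<Rightarrow> tens3 multiset" where
  "tprod3_term \<delta> p q r = (case (p, q, r) of ((c1, s1, u1, v1), (c2, s2, u2, v2), (c3, s3, u3, v3)) \<Rightarrow>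
     if \<not> ((ord \<delta> s1 + 2) + (ord \<delta> s2 + 2) + (ord \<delta> s3 + 2) > 0)
      then {#(c1 * c2 * c3, Prod s1 s2 s3, u1 @ u2 @ u3, v1 @ v2 @ v3)#} else {#})"

definition tprod3 :: "real \<Rightarrow> tens3 multiset \<Rightarrow> tens3 multiset \<Rightarrow> tens3 multiset \<Rightarrow> tens3 multiset"
  where
  "tprod3 \<delta> M N K = (\<Sum>p\<in>#M. \<Sum>q\<in>#N. \<Sum>r\<in>#K. tprod3_term \<delta> p q r)"

lemma tprod3_sum_mset:
  "tprod3 \<delta> (\<Sum>x\<in>#A. F x) (\<Sum>y\<in>#B. G y) (\<Sum>z\<in>#C. H z) =
   (\<Sum>x\<in>#A. \<Sum>y\<in>#B. \<Sum>z\<in>#C. tprod3 \<delta> (F x) (G y) (H z))"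
proof -
  have "tprod3 \<delta> (\<Sum>x\<in>#A. F x) (\<Sum>y\<in>#B. G y) (\<Sum>z\<in>#C. H z) =
      (\<Sum>x\<in>#A. \<Sum>p\<in>#F x. \<Sum>y\<in>#B. \<Sum>q\<in>#G y. \<Sum>z\<in>#C. \<Sum>r\<in>#H z. tprod3_term \<delta> p q r)"
    unfolding tprod3_def by (simp add: sum_mset_sum_mset_image)
  also have "\<dots> = (\<Sum>x\<in>#A. \<Sum>y\<in>#B. \<Sum>p\<in>#F x. \<Sum>q\<in>#G y. \<Sum>z\<in>#C. \<Sum>r\<in>#H z. tprod3_term \<delta> p q r)"
    by (rule sum_mset_cong) (rule sum_mset.swap)
  also have "\<dots> = (\<Sum>x\<in>#A. \<Sum>y\<in>#B. \<Sum>z\<in>#C. \<Sum>p\<in>#F x. \<Sum>q\<in>#G y. \<Sum>r\<in>#H z. tprod3_term \<delta> p q r)"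
    by (rule sum_mset_cong)+ (rule sum_mset_swap3)
  finally show ?thesis unfolding tprod3_def .
qed

lemma tprod3_image_mset:
  "tprod3 \<delta> (image_mset f A) (image_mset g B) (image_mset h C) =
   (\<Sum>x\<in>#A. \<Sum>y\<in>#B. \<Sum>z\<in>#C. tprod3_term \<delta> (f x) (g y) (h z))"
  using tprod3_sum_mset[where F = "\<lambda>x. {#f x#}" and G = "\<lambda>y. {#g y#}" and H = "\<lambda>z. {#h z#}"]
  by (simp add: tprod3_def)

(* copL_T and copL_I apply \<Delta> \<otimes> Id, reading s in (c, s, w) as the tree s resp. the planted tree
   I(s); copR applies Id \<otimes> \<Delta>. *)
definition copL_T :: "real \<Rightarrow> nat \<Rightarrow> tens2 multiset \<Rightarrow> tens3 multiset" where
  "copL_T \<delta> d M =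
     (\<Sum>(c, s, w)\<in>#M. image_mset (\<lambda>(c', s', w'). (c * c', s', w', w)) (mset (dT \<delta> d s)))"

definition copL_I :: "real \<Rightarrow> nat \<Rightarrow> tens2 multiset \<Rightarrow> tens3 multiset" where
  "copL_I \<delta> d M =
     (\<Sum>(c, s, w)\<in>#M. image_mset (\<lambda>(c', s', w'). (c * c', s', w', w)) (mset (dI \<delta> d s)))"

definition copR ::
    "real \<Rightarrow> nat \<Rightarrow> (real \<times> 'a \<times> pl list) multiset \<Rightarrow> (real \<times> 'a \<times> pl list \<times> pl list) multiset"
  where
  "copR \<delta> d M =
     (\<Sum>(c, s, w)\<in>#M. image_mset (\<lambda>(c', w1, w2). (c * c', s, w1, w2)) (mset (copW \<delta> d w)))"

lemma copR_tprod_mset: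
  "copR \<delta> d (tprod_mset \<delta> A B C) = tprod3 \<delta> (copR \<delta> d A) (copR \<delta> d B) (copR \<delta> d C)"
proof -
  have "tprod3 \<delta> (copR \<delta> d A) (copR \<delta> d B) (copR \<delta> d C) =
    (\<Sum>(c1, s1, w1)\<in>#A. \<Sum>(c2, s2, w2)\<in>#B. \<Sum>(c3, s3, w3)\<in>#C. tprod3 \<delta>
       (image_mset (\<lambda>(c', u, v). (c1 * c', s1, u, v)) (mset (copW \<delta> d w1)))
       (image_mset (\<lambda>(c', u, v). (c2 * c', s2, u, v)) (mset (copW \<delta> d w2)))
       (image_mset (\<lambda>(c', u, v). (c3 * c', s3, u, v)) (mset (copW \<delta> d w3))))"
    unfolding copR_def tprod3_sum_mset by (simp add: split_beta')
  also have "\<dots> = copR \<delta> d (tprod_mset \<delta> A B C)"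
    unfolding tprod3_image_mset copR_def tprod_mset_def
    by (simp add: split_beta' sum_mset_sum_mset_image sum_mset_sum_mset image_mset_sum_mset mult_ac
        multiset.map_comp o_def mset_copW_append tprod3_term_def sum_mset_if_const
        if_distrib[of "image_mset _"] if_distrib[of sum_mset] cong: if_cong)
  finally show ?thesis by simp
qed

lemma copL_T_tprod_mset:
  assumes "\<delta> > 0"
    and untruncated: "\<forall>(c1, s1, w1)\<in>#A. \<forall>(c2, s2, w2)\<in>#B. \<forall>(c3, s3, w3)\<in>#C.
      ord \<delta> s1 + ord \<delta> s2 + ord \<delta> s3 + 6 \<le> 0"
  shows "copL_T \<delta> d (tprod_mset \<delta> A B C) = tprod3 \<delta> (copL_I \<delta> d A) (copL_I \<delta> d B) (copL_I \<delta> d C)"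
proof -
  have ok:
    "\<not> ((ord \<delta> (fst (snd x)) + 2) + (ord \<delta> (fst (snd y)) + 2) + (ord \<delta> (fst (snd z)) + 2) > 0)"
    if "x \<in># A" "y \<in># B" "z \<in># C" for x y z
    using untruncated that by fastforce
  have "copL_T \<delta> d (tprod_mset \<delta> A B C) = (\<Sum>(c1, s1, w1)\<in>#A. \<Sum>(c2, s2, w2)\<in>#B. \<Sum>(c3, s3, w3)\<in>#C.
     image_mset (\<lambda>(c', s', w'). (c1 * c2 * c3 * c', s', w', w1 @ w2 @ w3))
       (mset (dT \<delta> d (Prod s1 s2 s3))))"
    unfolding copL_T_def tprod_mset_def
    by (simp add: split_beta' sum_mset_sum_mset_image sum_mset_sum_mset image_mset_sum_mset
        multiset.map_comp o_def if_distrib[of "image_mset _"] if_distrib[of sum_mset] cong: if_cong)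
      (intro sum_mset_cong, use ok in simp)
  also have "\<dots> = tprod3 \<delta> (copL_I \<delta> d A) (copL_I \<delta> d B) (copL_I \<delta> d C)"
    unfolding copL_I_def tprod3_sum_mset tprod3_image_mset dT_Prod[OF assms(1)] mset_tprod
    by (simp add: tprod_mset_def tprod3_image_mset tprod3_term_def split_beta'
        sum_mset_sum_mset_image sum_mset_sum_mset image_mset_sum_mset mult_ac multiset.map_comp o_def
        sum_mset_if_const if_distrib[of "image_mset _"] if_distrib[of sum_mset] cong: if_cong)
  finally show ?thesis .
qed

definition coassoc_T :: "real \<Rightarrow> nat \<Rightarrow> tr \<Rightarrow> bool" where
  "coassoc_T \<delta> d t \<longleftrightarrow> copL_T \<delta> d (mset (dT \<delta> d t)) = copR \<delta> d (mset (dT \<delta> d t))"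

definition coassoc_I :: "real \<Rightarrow> nat \<Rightarrow> tr \<Rightarrow> bool" where
  "coassoc_I \<delta> d t \<longleftrightarrow> copL_I \<delta> d (mset (dI \<delta> d t)) = copR \<delta> d (mset (dI \<delta> d t))"

lemma coassoc_T_if_primitive: "dT \<delta> d t = [(1, t, [])] \<Longrightarrow> coassoc_T \<delta> d t"
  unfolding coassoc_T_def copL_T_def copR_def by simp

lemma coassoc_T_Prod:
  assumes "\<delta> > 0" "ord \<delta> (Prod a b c) \<le> 0"
    and "coassoc_I \<delta> d a" "coassoc_I \<delta> d b" "coassoc_I \<delta> d c"
  shows "coassoc_T \<delta> d (Prod a b c)"
proof -
  have "\<forall>(c1, s1, w1)\<in>#mset (dI \<delta> d a). \<forall>(c2, s2, w2)\<in>#mset (dI \<delta> d b).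
      \<forall>(c3, s3, w3)\<in>#mset (dI \<delta> d c). ord \<delta> s1 + ord \<delta> s2 + ord \<delta> s3 + 6 \<le> 0"
    using dT_dI_ord_le[of \<delta> d a] dT_dI_ord_le[of \<delta> d b] dT_dI_ord_le[of \<delta> d c] assms(2) by fastforce
  then show ?thesis
    using assms(3-5)
    unfolding coassoc_T_def coassoc_I_def dT_Prod[OF assms(1)] mset_tprod copR_tprod_mset
    by (simp add: copL_T_tprod_mset[OF assms(1)])
qed

lemma coassoc_I_One: "coassoc_I \<delta> d One"
  unfolding coassoc_I_def copL_I_def copR_def by (simp add: dI_One mset_copW_single copP_def)

lemma coassoc_I_X: "coassoc_I \<delta> d (X i)"
  unfolding coassoc_I_def copL_I_def copR_def
  by (simp add: dI_One dI_X mset_copW_single copP_def dIp_def add_mset_commute)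

lemma coassoc_I_if_inW: "inW \<delta> t \<Longrightarrow> coassoc_I \<delta> d t"
  unfolding coassoc_I_def copL_I_def copR_def by (simp add: dI_inW)

definition dims :: "nat \<Rightarrow> nat multiset" where
  "dims d = mset_set {1..d}"

definition Xterms :: "real \<Rightarrow> nat \<Rightarrow> tr \<Rightarrow> tens2 multiset" where
  "Xterms \<delta> d t = (\<Sum>i\<in>#dims d. if Ipnz \<delta> d i t then {#(1, X i, [PIp i t])#} else {#})"

lemma mset_dI_not_inW:
  assumes "t \<noteq> One" "\<And>i. t \<noteq> X i" "\<not> inW \<delta> t"
  shows "mset (dI \<delta> d t) = add_mset (1, One, [PI t]) (Xterms \<delta> d t + mset (dT \<delta> d t))"
proof -
  have "mset [1..<d+1] = dims d"
    by (simp add: dims_def atLeastLessThanSuc_atLeastAtMost del: upt_Suc)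
  then show ?thesis
    unfolding dI_not_inW[OF assms] Xterms_def
    by (simp add: if_distrib[of mset] cong: if_cong del: upt_Suc)
qed

(* The parts I(1) \<otimes> I(s) \<otimes> w and \<Sum>i X_i \<otimes> I+_i(s) \<otimes> w of (\<Delta> \<otimes> Id)(I(s) \<otimes> w). *)
definition copL_one :: "tens2 multiset \<Rightarrow> tens3 multiset" where
  "copL_one M = image_mset (\<lambda>(c, s, w). (c, One, [PI s], w)) M"

definition copL_X :: "real \<Rightarrow> nat \<Rightarrow> tens2 multiset \<Rightarrow> tens3 multiset" where
  "copL_X \<delta> d M = (\<Sum>(c, s, w)\<in>#M. \<Sum>i\<in>#dims d.
     if Ipnz \<delta> d i s then {#(c, X i, [PIp i s], w)#} else {#})"

lemma copL_I_not_inW: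
  assumes "\<forall>(c, s, w)\<in>#M. s \<noteq> One \<and> (\<forall>i. s \<noteq> X i) \<and> \<not> inW \<delta> s"
  shows "copL_I \<delta> d M = copL_one M + copL_X \<delta> d M + copL_T \<delta> d M"
proof -
  have "copL_I \<delta> d M = (\<Sum>(c, s, w)\<in>#M. image_mset (\<lambda>(c', s', w'). (c * c', s', w', w))
      (add_mset (1, One, [PI s]) (Xterms \<delta> d s + mset (dT \<delta> d s))))"
    unfolding copL_I_def using assms by (intro sum_mset_cong) (auto simp: mset_dI_not_inW)
  then show ?thesis
    unfolding copL_one_def copL_X_def copL_T_def Xterms_def
    by (simp add: split_beta' sum_mset.distrib sum_mset_add_mset image_mset_sum_mset
        if_distrib[of "image_mset _"] cong: if_cong)
qed

lemma copL_X_Xterms: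
  "copL_X \<delta> d (Xterms \<delta> d t) =
     (\<Sum>i\<in>#dims d. if Ipnz \<delta> d i t then {#(1, X i, [PIp i (X i)], [PIp i t])#} else {#})"
proof -
  have "(\<Sum>j\<in>#dims d. if Ipnz \<delta> d j (X i) then {#(1::real, X j, [PIp j (X i)], [PIp i t])#} else {#})
      = {#(1, X i, [PIp i (X i)], [PIp i t])#}" if "i \<in># dims d" for i
  proof -
    have i: "1 \<le> i" "i \<le> d" "count (dims d) i = 1"
      using that by (simp_all add: dims_def)
    then show ?thesis
      using Ipnz_X_iff[OF i(1,2)]
        sum_mset_if_eq[where M = "dims d" and f = "\<lambda>j. (1::real, X j, [PIp j (X i)], [PIp i t])"]
      by (simp cong: if_cong)
  qed
  then show ?thesis
    unfolding copL_X_def Xterms_def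
    by (simp add: sum_mset_sum_mset_image sum_mset_if_const if_distrib[of sum_mset] cong: if_cong)
      (rule sum_mset_cong, simp)
qed

lemma copL_I_Xterms:
  "copL_I \<delta> d (Xterms \<delta> d t) = copL_one (Xterms \<delta> d t) + copL_X \<delta> d (Xterms \<delta> d t)"
  unfolding copL_X_Xterms unfolding copL_I_def copL_one_def Xterms_def
  by (simp add: dI_X sum_mset_sum_mset_image sum_mset_sum_mset image_mset_sum_mset
      sum_mset.distrib[symmetric] if_distrib[of "image_mset _"] if_distrib[of sum_mset] cong: if_cong)
    (rule sum_mset_cong, simp)

lemma copR_root: "copR \<delta> d {#(1, One, [PI t])#} = copL_one (mset (dI \<delta> d t))"
  unfolding copR_def copL_one_def
  by (simp add: mset_copW_single copP_def split_beta' multiset.map_comp o_def)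

lemma copR_Xterms:
  assumes "\<And>i. t \<noteq> X i"
    and Ipnz_dT: "\<And>i c s w. (c, s, w) \<in> set (dT \<delta> d t) \<Longrightarrow> Ipnz \<delta> d i s \<Longrightarrow> Ipnz \<delta> d i t"
  shows "copR \<delta> d (Xterms \<delta> d t) = copL_X \<delta> d (Xterms \<delta> d t) + copL_X \<delta> d (mset (dT \<delta> d t))"
proof -
  define B where "B i = (\<Sum>(c, s, w)\<in>#mset (dT \<delta> d t).
    if Ipnz \<delta> d i s then {#(c, X i, [PIp i s], w)#} else {#})" for i
  have dIp: "mset (dIp \<delta> d i t) = add_mset (1, PIp i (X i), [PIp i t])
      (\<Sum>(c, s, w)\<in>#mset (dT \<delta> d t). if Ipnz \<delta> d i s then {#(c, PIp i s, w)#} else {#})"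
    if "Ipnz \<delta> d i t" for i
  proof -
    have "inNt \<delta> d t" using that assms(1) by (simp add: Ipnz_def)
    then show ?thesis using assms(1)[of i] unfolding dIp_def
      by (simp add: split_beta' if_distrib[of mset] cong: if_cong)
  qed
  have B_if: "B i = (if Ipnz \<delta> d i t then B i else {#})" for i
    unfolding B_def using Ipnz_dT by (auto intro!: sum_mset.neutral)
  have "copR \<delta> d (Xterms \<delta> d t) =
      (\<Sum>i\<in>#dims d. if Ipnz \<delta> d i t then {#(1, X i, [PIp i (X i)], [PIp i t])#} + B i else {#})"
    unfolding copR_def Xterms_def B_def
    by (simp add: sum_mset_sum_mset_image if_distrib[of "image_mset _"] if_distrib[of sum_mset]
        cong: if_cong)
      (rule sum_mset_cong, simp add: mset_copW_single copP_def dIp image_mset_sum_mset split_beta'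
        sum_mset_sum_mset if_distrib[of "image_mset _"] if_distrib[of sum_mset]
        multiset.map_comp o_def cong: if_cong)
  also have "\<dots> = copL_X \<delta> d (Xterms \<delta> d t) + (\<Sum>i\<in>#dims d. B i)"
    unfolding copL_X_Xterms sum_mset.distrib[symmetric] by (rule sum_mset_cong) (subst B_if, simp)
  also have "(\<Sum>i\<in>#dims d. B i) = copL_X \<delta> d (mset (dT \<delta> d t))"
    unfolding B_def copL_X_def by (simp add: split_beta') (rule sum_mset.swap)
  finally show ?thesis .
qed

lemma coassoc_I_not_inW:
  assumes "\<delta> > 0" "t \<noteq> One" "\<And>i. t \<noteq> X i" "\<not> inW \<delta> t" "coassoc_T \<delta> d t"
    and "\<And>i c s w. (c, s, w) \<in> set (dT \<delta> d t) \<Longrightarrow> Ipnz \<delta> d i s \<Longrightarrow> Ipnz \<delta> d i t"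
  shows "coassoc_I \<delta> d t"
proof -
  let ?D = "mset (dT \<delta> d t)" and ?X = "Xterms \<delta> d t"
  have dI: "mset (dI \<delta> d t) = add_mset (1, One, [PI t]) (?X + ?D)"
    using assms(2-4) by (rule mset_dI_not_inW)
  have "\<forall>(c, s, w)\<in>#?D. s \<noteq> One \<and> (\<forall>i. s \<noteq> X i) \<and> \<not> inW \<delta> s"
    using dT_shape[of _ _ _ \<delta> d t] dT_dI_inW[OF assms(1), of t d] assms(2-4) by fastforce
  then have "copL_I \<delta> d (mset (dI \<delta> d t)) = add_mset (1, One, [PI One], [PI t])
      (copL_one ?X + copL_X \<delta> d ?X + (copL_one ?D + copL_X \<delta> d ?D + copL_T \<delta> d ?D))"
    by (simp add: dI copL_I_def dI_One flip: copL_I_Xterms copL_I_not_inW)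
  also have "\<dots> = copL_one (mset (dI \<delta> d t)) + (copL_X \<delta> d ?X + copL_X \<delta> d ?D) + copL_T \<delta> d ?D"
    by (simp add: dI copL_one_def ac_simps)
  also have "\<dots> = copR \<delta> d {#(1, One, [PI t])#} + copR \<delta> d ?X + copR \<delta> d ?D"
    using assms(5) by (simp add: coassoc_T_def copR_root copR_Xterms[OF assms(3,6)])
  also have "\<dots> = copR \<delta> d (mset (dI \<delta> d t))"
    unfolding dI copR_def by simp
  finally show ?thesis unfolding coassoc_I_def .
qed

lemma Ipnz_of_left_factor:
  assumes "\<not> inW \<delta> t" "ord \<delta> t \<le> 0" "t \<noteq> Prod One One One \<Longrightarrow> ord \<delta> t \<notin> \<int>"
    and s: "(c, s, w) \<in> set (dT \<delta> d t)" and "Ipnz \<delta> d i s"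
  shows "Ipnz \<delta> d i t"
proof (cases "s = t")
  case False
  then obtain a b c where "s = Prod a b c"
    using dT_shape[OF s] by blast
  then have s_Nt: "inNt \<delta> d s"
    using assms(5) by (simp add: Ipnz_def)
  have "ord \<delta> s \<le> ord \<delta> t"
    using dT_dI_ord_le[of \<delta> d t] s by fastforce
  have "t \<noteq> One" "\<And>j. t \<noteq> X j"
    using s False by auto
  then have t_No: "inNo \<delta> d t"
    using assms(1,2) by (simp add: inNo_def inN_def inW_def isPoly_def)
  have "t \<noteq> Prod One One One"
  proof
    assume t: "t = Prod One One One"
    then have "s = t"
      using s by (simp add: dI_def dI_of_def tprod_def split: if_splits)
    then show False using False by simp
  qed
  then have "ord \<delta> t \<noteq> 0"
    using assms(3) by (metis Ints_0)
  then have "inNt \<delta> d t"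
    using t_No s_Nt \<open>ord \<delta> s \<le> ord \<delta> t\<close> assms(2) by (simp add: inNt_def)
  then show ?thesis by (simp add: Ipnz_def)
qed (use assms(5) in simp)

lemma coassoc_I_if_coassoc_T:
  assumes "\<delta> > 0"
    and nonint: "\<forall>t. wf d t \<and> (inW \<delta> t \<or> inNo \<delta> d t) \<and> t \<noteq> Prod One One One \<longrightarrow> ord \<delta> t \<notin> \<int>"
    and "wf d t" "ord \<delta> t \<le> 0" "t \<noteq> One" "\<And>j. t \<noteq> X j" "coassoc_T \<delta> d t"
  shows "coassoc_I \<delta> d t"
proof (cases "inW \<delta> t")
  case True
  then show ?thesis by (rule coassoc_I_if_inW)
next
  case False
  have "t \<noteq> Prod One One One \<Longrightarrow> ord \<delta> t \<notin> \<int>"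
    using nonint assms(3-6) False by (auto simp: inNo_def inN_def inW_def isPoly_def)
  with False assms(4) have "Ipnz \<delta> d i s \<Longrightarrow> Ipnz \<delta> d i t" if "(c, s, w) \<in> set (dT \<delta> d t)" for i c s w
    using that by (blast intro: Ipnz_of_left_factor)
  then show ?thesis
    using assms(1,5-7) False by (blast intro: coassoc_I_not_inW)
qed

lemma coassoc_T_and_I:
  assumes "\<delta> > 0"
    and nonint: "\<forall>t. wf d t \<and> (inW \<delta> t \<or> inNo \<delta> d t) \<and> t \<noteq> Prod One One One \<longrightarrow> ord \<delta> t \<notin> \<int>"
  shows "wf d t \<Longrightarrow> ord \<delta> t \<le> 0 \<Longrightarrow> coassoc_T \<delta> d t \<and> coassoc_I \<delta> d t"
proof (induction t)
  case One
  then show ?case by (simp add: coassoc_T_if_primitive coassoc_I_One)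
next
  case (X i)
  then show ?case by (simp add: coassoc_T_if_primitive coassoc_I_X)
next
  case Xi
  have "coassoc_T \<delta> d Xi" by (simp add: coassoc_T_if_primitive)
  with Xi show ?case by (simp add: coassoc_I_if_coassoc_T[OF assms])
next
  case (Prod a b c)
  have "ord \<delta> a \<le> 0" "ord \<delta> b \<le> 0" "ord \<delta> c \<le> 0"
    using Prod.prems(2) ord_factors_lt_ord_Prod[OF assms(1), where a = a and b = b and c = c]
    by auto
  with Prod have "coassoc_I \<delta> d a" "coassoc_I \<delta> d b" "coassoc_I \<delta> d c"
    by simp_all
  then have "coassoc_T \<delta> d (Prod a b c)"
    using assms(1) Prod.prems(2) by (blast intro: coassoc_T_Prod)
  with Prod.prems show ?case by (simp add: coassoc_I_if_coassoc_T[OF assms])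
qed

lemma mset_lhs_ETr:
  "mset (lhs \<delta> d (ETr t)) =
     image_mset (\<lambda>(c, s, w, w'). (c, ETr s, w, w')) (copL_T \<delta> d (mset (dT \<delta> d t)))"
  unfolding lhs_def copL_T_def cop_def
  by (simp add: split_beta' image_mset_sum_mset multiset.map_comp o_def)

lemma mset_rhs_ETr:
  "mset (rhs \<delta> d (ETr t)) =
     image_mset (\<lambda>(c, s, w, w'). (c, ETr s, w, w')) (copR \<delta> d (mset (dT \<delta> d t)))"
  unfolding rhs_def copR_def cop_def
  by (simp add: split_beta' image_mset_sum_mset multiset.map_comp o_def)

lemma mset_lhs_PI:
  "mset (lhs \<delta> d (EPl (PI t))) =
     image_mset (\<lambda>(c, s, w, w'). (c, EPl (PI s), w, w')) (copL_I \<delta> d (mset (dI \<delta> d t)))"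
  unfolding lhs_def copL_I_def cop_def copP_def
  by (simp add: split_beta' image_mset_sum_mset multiset.map_comp o_def)

lemma mset_rhs_PI:
  "mset (rhs \<delta> d (EPl (PI t))) =
     image_mset (\<lambda>(c, s, w, w'). (c, EPl (PI s), w, w')) (copR \<delta> d (mset (dI \<delta> d t)))"
  unfolding rhs_def copR_def cop_def copP_def
  by (simp add: split_beta' image_mset_sum_mset multiset.map_comp o_def)

theorem lemma4p6:
  fixes \<delta> :: real and d :: nat and \<sigma> :: el
  assumes "d \<ge> 1" and "\<delta> > 0"
    and "\<forall>t. wf d t \<and> (inW \<delta> t \<or> inNo \<delta> d t) \<and> t \<noteq> Prod One One One
              \<longrightarrow> ord \<delta> t \<notin> \<int>"
    and "inT \<delta> d \<sigma>"
  shows "vec (lhs \<delta> d \<sigma>) = vec (rhs \<delta> d \<sigma>)"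
proof (rule vec_cong_mset)
  from assms(4) consider (tree) t where "\<sigma> = ETr t" "wf d t" "ord \<delta> t \<le> 0"
    | (planted) t where "\<sigma> = EPl (PI t)" "wf d t" "ord \<delta> t \<le> 0"
    unfolding inT_def by (auto simp: inW_def inNo_def inN_def isPoly_def)
  then show "mset (lhs \<delta> d \<sigma>) = mset (rhs \<delta> d \<sigma>)"
  proof cases
    case tree
    then have "coassoc_T \<delta> d t" using coassoc_T_and_I[OF assms(2,3)] by blast
    with tree show ?thesis by (simp add: mset_lhs_ETr mset_rhs_ETr coassoc_T_def)
  next
    case planted
    then have "coassoc_I \<delta> d t" using coassoc_T_and_I[OF assms(2,3)] by blast
    with planted show ?thesis by (simp add: mset_lhs_PI mset_rhs_PI coassoc_I_def)
  qed
qed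

end
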